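(* If a real symmetric matrix has symmetric tropical rank two, then it has tropical rank two.
   Context: For an $r\times r$ submatrix of a real matrix $A$ with row index set $I$ and column index set $J$, each bijection $\rho:I\to J$ has value $\sum_{i\in I}A_{i,\rho(i)}$; the submatrix is tropically singular if the minimum value is attained by at least two distinct bijections. For symmetric $A$, the submatrix is symmetrically tropically singular if the minimum is attained by at least two distinct monomials $\prod_{i\in I}X_{i,\rho(i)}$, where variables are subject to the identification $X_{i,j}=X_{j,i}$. The tropical rank (resp. symmetric tropical rank) of $A$ is the largest $r$ such that $A$ has an $r\times r$ submatrix (arbitrary row and column sets) that is not tropically singular (resp. not symmetrically tropically singular). *)

theory Defs
  imports Complex_Main "HOL-Library.Multiset"
begin

text \<open>Matrices are functions nat => nat => real; an m x n matrix uses rows {..<m}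
  and columns {..<n}.  A submatrix is given by a row set I and a column set J
  of equal cardinality.\<close>

definition trop_value :: "(nat \<Rightarrow> nat \<Rightarrow> real) \<Rightarrow> nat set \<Rightarrow> (nat \<Rightarrow> nat) \<Rightarrow> real" where
  "trop_value A I \<rho> = (\<Sum>i\<in>I. A i (\<rho> i))"

definition trop_min_bij :: "(nat \<Rightarrow> nat \<Rightarrow> real) \<Rightarrow> nat set \<Rightarrow> nat set \<Rightarrow> (nat \<Rightarrow> nat) \<Rightarrow> bool" where
  "trop_min_bij A I J \<rho> \<longleftrightarrow> bij_betw \<rho> I J \<and>
     (\<forall>\<sigma>. bij_betw \<sigma> I J \<longrightarrow> trop_value A I \<rho> \<le> trop_value A I \<sigma>)"

definition trop_singular :: "(nat \<Rightarrow> nat \<Rightarrow> real) \<Rightarrow> nat set \<Rightarrow> nat set \<Rightarrow> bool" where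
  "trop_singular A I J \<longleftrightarrow> (\<exists>\<rho>1 \<rho>2. trop_min_bij A I J \<rho>1 \<and> trop_min_bij A I J \<rho>2 \<and>
      (\<exists>i\<in>I. \<rho>1 i \<noteq> \<rho>2 i))"

text \<open>The monomial prod_{i in I} X_{i,rho(i)} modulo X_{ij} = X_{ji}: a multiset of
  unordered pairs {i, rho i}.\<close>
definition sym_monomial :: "nat set \<Rightarrow> (nat \<Rightarrow> nat) \<Rightarrow> nat set multiset" where
  "sym_monomial I \<rho> = image_mset (\<lambda>i. {i, \<rho> i}) (mset_set I)"

definition sym_trop_singular :: "(nat \<Rightarrow> nat \<Rightarrow> real) \<Rightarrow> nat set \<Rightarrow> nat set \<Rightarrow> bool" where
  "sym_trop_singular A I J \<longleftrightarrow> (\<exists>\<rho>1 \<rho>2. trop_min_bij A I J \<rho>1 \<and> trop_min_bij A I J \<rho>2 \<and>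
      sym_monomial I \<rho>1 \<noteq> sym_monomial I \<rho>2)"

definition tropical_rank :: "nat \<Rightarrow> nat \<Rightarrow> (nat \<Rightarrow> nat \<Rightarrow> real) \<Rightarrow> nat" where
  "tropical_rank m n A = Max {r. \<exists>I J. I \<subseteq> {..<m} \<and> J \<subseteq> {..<n} \<and> card I = r \<and> card J = r
      \<and> \<not> trop_singular A I J}"

definition symmetric_tropical_rank :: "nat \<Rightarrow> (nat \<Rightarrow> nat \<Rightarrow> real) \<Rightarrow> nat" where
  "symmetric_tropical_rank n A = Max {r. \<exists>I J. I \<subseteq> {..<n} \<and> J \<subseteq> {..<n} \<and> card I = r \<and> card J = r
      \<and> \<not> sym_trop_singular A I J}"

definition symmetric_matrix :: "nat \<Rightarrow> (nat \<Rightarrow> nat \<Rightarrow> real) \<Rightarrow> bool" where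
  "symmetric_matrix n A \<longleftrightarrow> (\<forall>i<n. \<forall>j<n. A i j = A j i)"

end

theory Submission
  imports Defs
begin

text \<open>Two bijections with the same values give the same monomial, so a symmetrically singular
  submatrix is tropically singular, and the tropical rank is at most the symmetric tropical rank.
  Conversely, on a 2 x 2 submatrix the only two bijections \<open>{a, b} \<rightarrow> {c, d}\<close> give the monomials
  \<open>X\<^sub>a\<^sub>c X\<^sub>b\<^sub>d\<close> and \<open>X\<^sub>a\<^sub>d X\<^sub>b\<^sub>c\<close>, which stay distinct modulo \<open>X\<^sub>i\<^sub>j = X\<^sub>j\<^sub>i\<close>; hence the two
  notions of singularity agree there, and a nonsingular 2 x 2 witness for the symmetric rank
  is one for the tropical rank as well.\<close>

lemma sym_monomial_cong:
  assumes "\<And>i. i \<in> I \<Longrightarrow> \<rho>1 i = \<rho>2 i"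
  shows "sym_monomial I \<rho>1 = sym_monomial I \<rho>2"
proof (cases "finite I")
  case True
  with assms show ?thesis
    unfolding sym_monomial_def by (intro image_mset_cong) auto
qed (simp add: sym_monomial_def)

lemma trop_singular_if_sym_trop_singular:
  assumes "sym_trop_singular A I J"
  shows "trop_singular A I J"
  using assms sym_monomial_cong unfolding sym_trop_singular_def trop_singular_def by metis

lemma sym_monomial_doubleton:
  assumes "a \<noteq> b"
  shows "sym_monomial {a, b} \<rho> = {#{a, \<rho> a}, {b, \<rho> b}#}"
  using assms by (simp add: sym_monomial_def)

lemma sym_trop_singular_if_trop_singular_card_2:
  assumes "card I = 2" and "trop_singular A I J"
  shows "sym_trop_singular A I J"
proof -
  obtain \<rho>1 \<rho>2 where min: "trop_min_bij A I J \<rho>1" "trop_min_bij A I J \<rho>2"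
    and differ: "\<exists>i\<in>I. \<rho>1 i \<noteq> \<rho>2 i"
    using assms(2) unfolding trop_singular_def by blast
  obtain a b where I: "I = {a, b}" and "a \<noteq> b"
    using assms(1) by (meson card_2_iff)
  have "bij_betw \<rho>1 {a, b} J" "bij_betw \<rho>2 {a, b} J"
    using min I unfolding trop_min_bij_def by auto
  then have "J = {\<rho>1 a, \<rho>1 b}" "J = {\<rho>2 a, \<rho>2 b}" and "\<rho>1 a \<noteq> \<rho>1 b" "\<rho>2 a \<noteq> \<rho>2 b"
    using \<open>a \<noteq> b\<close> by (auto simp: bij_betw_def)
  with differ I have swap: "\<rho>2 a = \<rho>1 b" "\<rho>2 b = \<rho>1 a"
    by (auto simp: doubleton_eq_iff)
  have "{#{a, \<rho>1 a}, {b, \<rho>1 b}#} \<noteq> {#{a, \<rho>1 b}, {b, \<rho>1 a}#}"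
    using \<open>a \<noteq> b\<close> \<open>\<rho>1 a \<noteq> \<rho>1 b\<close> by (auto simp: add_eq_conv_diff doubleton_eq_iff)
  then have "sym_monomial I \<rho>1 \<noteq> sym_monomial I \<rho>2"
    unfolding I sym_monomial_doubleton[OF \<open>a \<noteq> b\<close>] swap .
  with min show ?thesis
    unfolding sym_trop_singular_def by blast
qed

lemma finite_square_submatrix_sizes:
  fixes m n :: nat
  shows "finite {r. \<exists>I J. I \<subseteq> {..<m} \<and> J \<subseteq> {..<n} \<and> card I = r \<and> card J = r \<and> P I J}"
proof (rule finite_subset)
  show "{r. \<exists>I J. I \<subseteq> {..<m} \<and> J \<subseteq> {..<n} \<and> card I = r \<and> card J = r \<and> P I J} \<subseteq> {..m}"
    using card_mono[of "{..<m}"] by fastforce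
qed simp

lemma not_trop_singular_empty: "\<not> trop_singular A {} {}"
  unfolding trop_singular_def by simp

lemma not_sym_trop_singular_empty: "\<not> sym_trop_singular A {} {}"
  unfolding sym_trop_singular_def sym_monomial_def by simp

lemma card_le_tropical_rank:
  assumes "I \<subseteq> {..<m}" "J \<subseteq> {..<n}" "card I = card J" "\<not> trop_singular A I J"
  shows "card I \<le> tropical_rank m n A"
  unfolding tropical_rank_def using assms
  by (intro Max_ge[OF finite_square_submatrix_sizes]) auto

lemma symmetric_tropical_rank_attained:
  obtains I J where "I \<subseteq> {..<n}" "J \<subseteq> {..<n}"
    "card I = symmetric_tropical_rank n A" "card J = symmetric_tropical_rank n A"
    "\<not> sym_trop_singular A I J"
proof -
  let ?S = "{r. \<exists>I J. I \<subseteq> {..<n} \<and> J \<subseteq> {..<n} \<and> card I = r \<and> card J = r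
    \<and> \<not> sym_trop_singular A I J}"
  have "0 \<in> ?S"
    using not_sym_trop_singular_empty by fastforce
  then have "Max ?S \<in> ?S"
    using finite_square_submatrix_sizes by (intro Max_in) auto
  then show ?thesis
    using that unfolding symmetric_tropical_rank_def by blast
qed

lemma tropical_rank_le_symmetric_tropical_rank:
  "tropical_rank n n A \<le> symmetric_tropical_rank n A"
  unfolding tropical_rank_def symmetric_tropical_rank_def
proof (rule Max_mono)
  show "{r. \<exists>I J. I \<subseteq> {..<n} \<and> J \<subseteq> {..<n} \<and> card I = r \<and> card J = r \<and> \<not> trop_singular A I J}
    \<subseteq> {r. \<exists>I J. I \<subseteq> {..<n} \<and> J \<subseteq> {..<n} \<and> card I = r \<and> card J = r
      \<and> \<not> sym_trop_singular A I J}"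
    by (auto dest: trop_singular_if_sym_trop_singular)
  show "{r. \<exists>I J. I \<subseteq> {..<n} \<and> J \<subseteq> {..<n} \<and> card I = r \<and> card J = r \<and> \<not> trop_singular A I J}
    \<noteq> {}"
    using not_trop_singular_empty by fastforce
qed (rule finite_square_submatrix_sizes)

theorem corollary1:
  fixes n :: nat and A :: "nat \<Rightarrow> nat \<Rightarrow> real"
  assumes "symmetric_matrix n A"
    and "symmetric_tropical_rank n A = 2"
  shows "tropical_rank n n A = 2"
proof -
  obtain I J where "I \<subseteq> {..<n}" "J \<subseteq> {..<n}" "card I = 2" "card J = 2"
    and "\<not> sym_trop_singular A I J"
    by (rule symmetric_tropical_rank_attained[of n A, unfolded assms(2)])
  then have "\<not> trop_singular A I J"
    using sym_trop_singular_if_trop_singular_card_2 by blast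
  then have "2 \<le> tropical_rank n n A"
    using card_le_tropical_rank[of I n J n A] \<open>I \<subseteq> {..<n}\<close> \<open>J \<subseteq> {..<n}\<close> \<open>card I = 2\<close> \<open>card J = 2\<close>
    by simp
  with tropical_rank_le_symmetric_tropical_rank[of n A] assms(2) show ?thesis
    by linarith
qed

end
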